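(* Let $\gamma\in\mathbb C$ and $H_1(\gamma)=I-\gamma D$. Then $K_H(H_1(\gamma))=K_H(H_1(\gamma)^{-1})=n|\gamma|$.
   Context: Let $n\ge1$ and $\mathcal P_n$ the complex vector space of polynomials in one complex variable of degree at most $n$; $D$ is differentiation and $I$ the identity on $\mathcal P_n$. For nonzero $f$, $Z(f)$ is the multiset of roots of $f$ (with multiplicity; empty for nonzero constants); $Z(0)=\mathbb C$. For finite nonempty $A,B\subset\mathbb C$, $d_h(A,B)=\max_{y\in B}\min_{x\in A}|x-y|$ and $d_H(A,B)=\max\{d_h(A,B),d_h(B,A)\}$, with conventions $d_H(\emptyset,\emptyset)=0$, $d_H(A,\emptyset)=d_H(\emptyset,A)=+\infty$ for $A\ne\emptyset$, $d_H(A,B)=0$ if one of $A,B$ equals $\mathbb C$ and the other is nonempty. $K_H(T)=\sup_{f\in\mathcal P_n}d_H(Z(f),Z(Tf))$. *)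

theory Defs
  imports "HOL-Analysis.Analysis" "HOL-Computational_Algebra.Polynomial"
begin

text \<open>Zero set Z(f) as a set (Hausdorff distance only sees the underlying set); Z(0) = C.\<close>
definition Zset :: "complex poly \<Rightarrow> complex set" where
  "Zset f = (if f = 0 then UNIV else {z. poly f z = 0})"

definition dh :: "complex set \<Rightarrow> complex set \<Rightarrow> real" where
  "dh A B = Max ((\<lambda>y. Min ((\<lambda>x. cmod (x - y)) ` A)) ` B)"

definition dH :: "complex set \<Rightarrow> complex set \<Rightarrow> ereal" where
  "dH A B =
     (if A = {} \<and> B = {} then 0
      else if A = {} \<or> B = {} then \<infinity>
      else if A = UNIV \<or> B = UNIV then 0
      else ereal (max (dh A B) (dh B A)))"

definition Pn :: "nat \<Rightarrow> complex poly set" where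
  "Pn n = {f. degree f \<le> n}"

definition KH :: "nat \<Rightarrow> (complex poly \<Rightarrow> complex poly) \<Rightarrow> ereal" where
  "KH n T = (SUP f \<in> Pn n. dH (Zset f) (Zset (T f)))"

definition H1 :: "complex \<Rightarrow> complex poly \<Rightarrow> complex poly" where
  "H1 \<gamma> f = f - smult \<gamma> (pderiv f)"

definition H1inv :: "nat \<Rightarrow> complex \<Rightarrow> complex poly \<Rightarrow> complex poly" where
  "H1inv n \<gamma> f = (THE g. g \<in> Pn n \<and> H1 \<gamma> g = f)"

end

(*
  Let g = f - gamma f'. If g(w) = 0 and f(w) <> 0, then gamma f'(w)/f(w) = 1 with
  f'/f = sum_i 1/(w - a_i) over the roots a_i of f, so some root lies within
  deg f * |gamma| of w.

  Conversely let f(z) = 0, and shift z to the origin. Since sum_k gamma^k D^k inverts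
  I - gamma D, the functional L(P) = sum_k k! gamma^k coeff P k satisfies L(g) = f(z) = 0.
  On the other hand L cannot vanish on a polynomial of degree d whose roots all lie
  outside the closed disk of radius d |gamma|: by a Grace-Walsh-Szego type argument
  (an induction on the degree, each step being Laguerre's theorem on polar
  derivatives) it suffices that L((1 + t x)^d) = sum_k k! (d choose k) (gamma t)^k has
  no zero with d |gamma t| < 1, which is the Enestrom-Kakeya theorem because
  k! (d choose k) / d^k decreases in k. Hence g has a root within d |gamma| of z.

  For f = x^n we get g = x^(n-1) (x - n gamma), so the bound n |gamma| is attained. The
  inverse operator gives the same supremum because H1 gamma permutes P_n and the
  Hausdorff distance is symmetric.
*)

theory Submission
  imports Defs "HOL-Computational_Algebra.Fundamental_Theorem_Algebra"
begin

section \<open>A linear functional on polynomials and its symbol\<close>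

definition coeff_functional :: "(nat \<Rightarrow> 'a::comm_semiring_1) \<Rightarrow> 'a poly \<Rightarrow> 'a" where
  "coeff_functional c P = (\<Sum>k\<le>degree P. c k * coeff P k)"

lemma coeff_functional_eq_sum:
  "degree P \<le> N \<Longrightarrow> coeff_functional c P = (\<Sum>k\<le>N. c k * coeff P k)"
  unfolding coeff_functional_def
  by (rule sum.mono_neutral_left) (auto simp: coeff_eq_0)

lemma coeff_functional_1 [simp]: "coeff_functional c 1 = c 0"
  by (simp add: coeff_functional_def)

lemma coeff_functional_smult: "coeff_functional c (smult a P) = a * coeff_functional c P"
  by (subst coeff_functional_eq_sum[OF degree_smult_le])
    (simp add: coeff_functional_def sum_distrib_left algebra_simps)

lemma coeff_functional_linear_factor:
  "coeff_functional c ([:1, y:] * P) = coeff_functional (\<lambda>k. c k + y * c (Suc k)) P"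
proof -
  define N where "N = degree P"
  have "degree ([:1, y:] * P) \<le> Suc N"
    using degree_mult_le[of "[:1, y:]" P] by (auto simp: N_def split: if_splits)
  then have "coeff_functional c ([:1, y:] * P) =
      (\<Sum>k\<le>Suc N. c k * coeff P k) + (\<Sum>k\<le>Suc N. c k * coeff (pCons 0 (smult y P)) k)"
    by (simp add: coeff_functional_eq_sum mult_pCons_left sum.distrib algebra_simps)
  also have "(\<Sum>k\<le>Suc N. c k * coeff P k) = (\<Sum>k\<le>N. c k * coeff P k)"
    by (simp add: N_def coeff_eq_0)
  also have "(\<Sum>k\<le>Suc N. c k * coeff (pCons 0 (smult y P)) k) =
      (\<Sum>k\<le>N. c (Suc k) * (y * coeff P k))"
    by (subst sum.atMost_Suc_shift) simp
  also have "(\<Sum>k\<le>N. c k * coeff P k) + (\<Sum>k\<le>N. c (Suc k) * (y * coeff P k)) =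
      coeff_functional (\<lambda>k. c k + y * c (Suc k)) P"
    by (simp add: coeff_functional_def N_def sum.distrib algebra_simps)
  finally show ?thesis .
qed

text \<open>\<open>poly (symbol_poly m c) t\<close> is the value of \<open>coeff_functional c\<close> at \<open>[:1, t:] ^ m\<close>.\<close>

definition symbol_poly :: "nat \<Rightarrow> (nat \<Rightarrow> 'a::comm_semiring_1) \<Rightarrow> 'a poly" where
  "symbol_poly m c = (\<Sum>k\<le>m. monom (c k * of_nat (m choose k)) k)"

lemma coeff_symbol_poly: "coeff (symbol_poly m c) k = c k * of_nat (m choose k)"
  unfolding symbol_poly_def by (auto simp: coeff_sum coeff_monom binomial_eq_0)

lemma poly_symbol_poly: "poly (symbol_poly m c) t = (\<Sum>k\<le>m. c k * of_nat (m choose k) * t ^ k)"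
  unfolding symbol_poly_def by (simp add: poly_sum poly_monom)

lemma degree_symbol_poly: "degree (symbol_poly m c) \<le> m"
  by (rule degree_le) (simp add: coeff_symbol_poly binomial_eq_0)

lemma symbol_poly_polar_derivative:
  fixes c :: "nat \<Rightarrow> 'a::idom"
  shows "smult (of_nat (Suc m)) (symbol_poly m (\<lambda>k. c k + z * c (Suc k))) =
    smult (of_nat (Suc m)) (symbol_poly (Suc m) c) + [:z, -1:] * pderiv (symbol_poly (Suc m) c)"
proof (rule poly_eqI)
  fix k
  define C where "C j = (of_nat (Suc m choose j) :: 'a)" for j
  have b1: "of_nat (Suc k) * C (Suc k) = of_nat (Suc m) * of_nat (m choose k)"
    unfolding C_def by (metis Suc_times_binomial of_nat_mult)
  have "Suc m * (Suc m choose k) = k * (Suc m choose k) + Suc m * (m choose k)"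
  proof (cases "k \<le> Suc m")
    case True
    then have "k * (Suc m choose k) \<le> Suc m * (Suc m choose k)"
      by (rule mult_le_mono1)
    then show ?thesis
      using binomial_absorb_comp[of "Suc m" k] by (simp add: diff_mult_distrib)
  qed (simp add: binomial_eq_0)
  then have b2: "of_nat (Suc m) * C k = of_nat k * C k + of_nat (Suc m) * of_nat (m choose k)"
    unfolding C_def by (metis of_nat_add of_nat_mult)
  have "coeff ([:z, -1:] * pderiv (symbol_poly (Suc m) c)) k =
      z * of_nat (Suc k) * c (Suc k) * C (Suc k) - of_nat k * c k * C k"
    by (simp add: mult_pCons_left coeff_pCons coeff_pderiv coeff_symbol_poly C_def split: nat.split)
  then have "coeff (smult (of_nat (Suc m)) (symbol_poly (Suc m) c) +
      [:z, -1:] * pderiv (symbol_poly (Suc m) c)) k =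
      c k * (of_nat (Suc m) * C k - of_nat k * C k) + z * c (Suc k) * (of_nat (Suc k) * C (Suc k))"
    by (simp add: coeff_symbol_poly C_def algebra_simps)
  also have "\<dots> = coeff (smult (of_nat (Suc m)) (symbol_poly m (\<lambda>k. c k + z * c (Suc k)))) k"
    unfolding b1 b2 by (simp add: coeff_symbol_poly algebra_simps)
  finally show "coeff (smult (of_nat (Suc m)) (symbol_poly m (\<lambda>k. c k + z * c (Suc k)))) k =
      coeff (smult (of_nat (Suc m)) (symbol_poly (Suc m) c) +
        [:z, -1:] * pderiv (symbol_poly (Suc m) c)) k" ..
qed

section \<open>Laguerre's theorem on polar derivatives\<close>

lemma poly_pderiv_prod_linear:
  fixes a :: "nat \<Rightarrow> 'a::field"
  assumes "poly (\<Prod>i<m. [:-a i, 1:]) w \<noteq> 0"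
  shows "poly (pderiv (\<Prod>i<m. [:-a i, 1:])) w =
    poly (\<Prod>i<m. [:-a i, 1:]) w * (\<Sum>i<m. 1 / (w - a i))"
  using assms
proof (induction m)
  case (Suc m)
  define Q where "Q = (\<Prod>i<m. [:-a i, 1:])"
  have prod: "(\<Prod>i<Suc m. [:-a i, 1:]) = Q * [:-a m, 1:]"
    by (simp add: Q_def)
  have "poly Q w \<noteq> 0" and "w \<noteq> a m"
    using Suc.prems by (auto simp: prod Q_def)
  moreover have "poly (pderiv (Q * [:-a m, 1:])) w = poly Q w + (w - a m) * poly (pderiv Q) w"
    unfolding pderiv_mult by (simp add: pderiv_pCons algebra_simps)
  ultimately show ?case
    using Suc.IH unfolding prod Q_def[symmetric] by (simp only:) (simp add: field_simps)
qed simp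

lemma complex_poly_roots_logderiv:
  fixes p :: "complex poly"
  obtains root where "\<And>i. i < degree p \<Longrightarrow> poly p (root i) = 0"
    and "\<And>w. poly p w \<noteq> 0 \<Longrightarrow>
      poly (pderiv p) w = poly p w * (\<Sum>i<degree p. 1 / (w - root i))"
proof -
  obtain root where p: "smult (lead_coeff p) (\<Prod>i<degree p. [:-root i, 1:]) = p"
    by (rule complex_poly_decompose')
  define P where "P = (\<Prod>i<degree p. [:-root i, 1:])"
  have poly_p: "poly p x = lead_coeff p * poly P x" for x
    by (metis p P_def poly_smult)
  show ?thesis
  proof
    show "poly p (root i) = 0" if "i < degree p" for i
      using that by (auto simp: poly_p P_def poly_prod)
    show "poly (pderiv p) w = poly p w * (\<Sum>i<degree p. 1 / (w - root i))"
      if "poly p w \<noteq> 0" for w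
    proof -
      have "poly P w \<noteq> 0"
        using that by (simp add: poly_p)
      then have "poly (pderiv P) w = poly P w * (\<Sum>i<degree p. 1 / (w - root i))"
        unfolding P_def by (rule poly_pderiv_prod_linear)
      moreover have "pderiv p = smult (lead_coeff p) (pderiv P)"
        by (metis p P_def pderiv_smult)
      ultimately show ?thesis
        by (simp add: poly_p)
    qed
  qed
qed

lemma norm_inversion_disk_identity:
  fixes w v :: complex and r :: real
  defines "A \<equiv> r\<^sup>2 - (cmod w)\<^sup>2"
  shows "(cmod (of_real A * v + cnj w))\<^sup>2 - r\<^sup>2 = A * (r\<^sup>2 * (cmod v)\<^sup>2 - (cmod (w * v - 1))\<^sup>2)"
proof -
  obtain a b where w: "w = Complex a b" by (cases w)
  obtain c d where v: "v = Complex c d" by (cases v)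
  have A: "A = r\<^sup>2 - a\<^sup>2 - b\<^sup>2"
    by (simp add: A_def w cmod_power2)
  have "of_real A * v + cnj w = Complex (A * c + a) (A * d - b)"
    and "w * v - 1 = Complex (a * c - b * d - 1) (a * d + b * c)"
    and "(cmod v)\<^sup>2 = c\<^sup>2 + d\<^sup>2"
    by (simp_all add: w v complex_eq_iff cmod_power2)
  then show ?thesis
    by (simp only: cmod_power2 complex.sel) (simp add: A power2_eq_square algebra_simps)
qed

lemma disk_inversion_iff:
  fixes w v :: complex and r :: real
  assumes "cmod w < r" and "v \<noteq> 0"
  shows "r \<le> cmod (w - 1 / v) \<longleftrightarrow> cmod (of_real (r\<^sup>2 - (cmod w)\<^sup>2) * v + cnj w) \<le> r"
proof -
  define A where "A = r\<^sup>2 - (cmod w)\<^sup>2"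
  have "r > 0"
    using assms(1) norm_ge_zero[of w] by linarith
  have "A > 0"
    unfolding A_def using assms(1) by (simp add: power_strict_mono)
  have "w - 1 / v = (w * v - 1) / v"
    using assms(2) by (simp add: field_simps)
  then have "r \<le> cmod (w - 1 / v) \<longleftrightarrow> r * cmod v \<le> cmod (w * v - 1)"
    using assms(2) by (simp add: norm_divide pos_le_divide_eq)
  also have "\<dots> \<longleftrightarrow> (r * cmod v)\<^sup>2 \<le> (cmod (w * v - 1))\<^sup>2"
    using \<open>r > 0\<close> by (simp add: abs_le_square_iff[symmetric])
  also have "\<dots> \<longleftrightarrow> A * (r\<^sup>2 * (cmod v)\<^sup>2 - (cmod (w * v - 1))\<^sup>2) \<le> 0"
    using \<open>A > 0\<close> by (simp add: power_mult_distrib mult_le_0_iff)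
  also have "\<dots> \<longleftrightarrow> (cmod (of_real A * v + cnj w))\<^sup>2 \<le> r\<^sup>2"
    using norm_inversion_disk_identity[of r w v] unfolding A_def by linarith
  also have "\<dots> \<longleftrightarrow> cmod (of_real A * v + cnj w) \<le> r"
    using \<open>r > 0\<close> by (simp add: abs_le_square_iff[symmetric])
  finally show ?thesis
    unfolding A_def .
qed

text \<open>Here \<open>z = w - 1/v\<close> where \<open>v\<close> is the mean of the \<open>d\<close> points \<open>1/(w - root i)\<close> and
  \<open>M - d\<close> zeros. By \<open>disk_inversion_iff\<close> all these points lie in one closed disk, hence so
  does their mean, and the same lemma read backwards puts \<open>z\<close> outside the open disk.\<close>

lemma laguerre_polar_point_outside_disk:
  fixes w z :: complex and root :: "nat \<Rightarrow> complex"
  assumes w: "cmod w < r" and "d \<le> M" and "M > 0"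
    and roots: "\<And>i. i < d \<Longrightarrow> r \<le> cmod (root i)"
    and polar: "of_nat M + (z - w) * (\<Sum>i<d. 1 / (w - root i)) = 0"
  shows "r \<le> cmod z"
proof -
  define A where "A = r\<^sup>2 - (cmod w)\<^sup>2"
  define u where "u i = 1 / (w - root i)" for i
  define v where "v = 1 / (w - z)"
  have "z \<noteq> w"
    using polar \<open>M > 0\<close> by auto
  then have "v \<noteq> 0" and "(\<Sum>i<d. u i) = of_nat M * v"
    using polar by (auto simp: u_def v_def field_simps)
  have u_disk: "cmod (of_real A * u i + cnj w) \<le> r" if "i < d" for i
  proof -
    have "w \<noteq> root i"
      using roots[OF that] w by auto
    then show ?thesis
      using disk_inversion_iff[OF w, of "u i"] roots[OF that] by (simp add: u_def A_def)
  qed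
  have "(\<Sum>i<d. of_real A * u i + cnj w) = of_real A * (\<Sum>i<d. u i) + of_nat d * cnj w"
    by (simp add: sum.distrib sum_distrib_left)
  then have "of_nat M * (of_real A * v + cnj w) =
      (\<Sum>i<d. of_real A * u i + cnj w) + of_nat (M - d) * cnj w"
    using \<open>d \<le> M\<close> \<open>(\<Sum>i<d. u i) = of_nat M * v\<close> by (simp add: of_nat_diff algebra_simps)
  then have "real M * cmod (of_real A * v + cnj w) =
      cmod ((\<Sum>i<d. of_real A * u i + cnj w) + of_nat (M - d) * cnj w)"
    by (metis norm_mult norm_of_nat)
  also have "\<dots> \<le> cmod (\<Sum>i<d. of_real A * u i + cnj w) + real (M - d) * cmod w"
    by (rule order_trans[OF norm_triangle_ineq]) (simp add: norm_mult)
  also have "\<dots> \<le> (\<Sum>i<d. cmod (of_real A * u i + cnj w)) + real (M - d) * cmod w"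
    by (rule add_right_mono) (rule norm_sum)
  also have "\<dots> \<le> real d * r + real (M - d) * r"
    using sum_mono[of "{..<d}" "\<lambda>i. cmod (of_real A * u i + cnj w)" "\<lambda>_. r"] u_disk w
    by (intro add_mono mult_left_mono) auto
  also have "\<dots> = real M * r"
    using \<open>d \<le> M\<close> by (simp add: of_nat_diff algebra_simps)
  finally have "cmod (of_real A * v + cnj w) \<le> r"
    using \<open>M > 0\<close> by simp
  then have "r \<le> cmod (w - 1 / v)"
    using disk_inversion_iff[OF w \<open>v \<noteq> 0\<close>] by (simp add: A_def)
  then show ?thesis
    by (simp add: v_def)
qed

lemma symbol_poly_shift_zero_free:
  fixes c :: "nat \<Rightarrow> complex"
  assumes zero_free: "\<forall>t\<in>ball 0 r. poly (symbol_poly (Suc m) c) t \<noteq> 0" and z: "cmod z < r"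
  shows "\<forall>t\<in>ball 0 r. poly (symbol_poly m (\<lambda>k. c k + z * c (Suc k))) t \<noteq> 0"
proof (intro ballI notI)
  fix w assume "w \<in> ball 0 r" and "poly (symbol_poly m (\<lambda>k. c k + z * c (Suc k))) w = 0"
  then have w: "cmod w < r"
    by simp
  define p where "p = symbol_poly (Suc m) c"
  have polar: "of_nat (Suc m) * poly p w + (z - w) * poly (pderiv p) w = 0"
    using arg_cong[OF symbol_poly_polar_derivative[of m c z], of "\<lambda>q. poly q w"]
      \<open>poly (symbol_poly m _) w = 0\<close> by (simp add: p_def algebra_simps)
  obtain root where roots: "\<And>i. i < degree p \<Longrightarrow> poly p (root i) = 0"
    and logderiv: "\<And>x. poly p x \<noteq> 0 \<Longrightarrow>
      poly (pderiv p) x = poly p x * (\<Sum>i<degree p. 1 / (x - root i))"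
    using complex_poly_roots_logderiv[of p] by blast
  have "poly p w \<noteq> 0"
    using zero_free w by (simp add: p_def)
  moreover have "poly p w * (of_nat (Suc m) + (z - w) * (\<Sum>i<degree p. 1 / (w - root i))) = 0"
    using polar \<open>poly p w \<noteq> 0\<close> by (simp add: logderiv algebra_simps)
  ultimately have "of_nat (Suc m) + (z - w) * (\<Sum>i<degree p. 1 / (w - root i)) = 0"
    by simp
  moreover have "r \<le> cmod (root i)" if "i < degree p" for i
    using zero_free roots[OF that] by (force simp: p_def)
  ultimately have "r \<le> cmod z"
    using w degree_symbol_poly[of "Suc m" c]
    by (intro laguerre_polar_point_outside_disk[of w r "degree p" "Suc m" root z]) (auto simp: p_def)
  then show False
    using z by simp
qed

section \<open>A theorem of Grace-Walsh-Szego type\<close>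

lemma coeff_functional_prod_linear_nonzero:
  fixes c y :: "nat \<Rightarrow> complex"
  assumes "r > 0" and "\<forall>t\<in>ball 0 r. poly (symbol_poly m c) t \<noteq> 0" and "\<forall>i<m. cmod (y i) < r"
  shows "coeff_functional c (\<Prod>i<m. [:1, y i:]) \<noteq> 0"
  using assms(2,3)
proof (induction m arbitrary: c)
  case 0
  then have "poly (symbol_poly 0 c) 0 \<noteq> 0"
    using \<open>r > 0\<close> by simp
  then show ?case
    by (simp add: poly_symbol_poly)
next
  case (Suc m)
  have "(\<Prod>i<Suc m. [:1, y i:]) = [:1, y m:] * (\<Prod>i<m. [:1, y i:])"
    by (simp add: mult.commute)
  then have "coeff_functional c (\<Prod>i<Suc m. [:1, y i:]) =
      coeff_functional (\<lambda>k. c k + y m * c (Suc k)) (\<Prod>i<m. [:1, y i:])"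
    by (simp only: coeff_functional_linear_factor)
  also have "\<dots> \<noteq> 0"
    using Suc.prems by (intro Suc.IH symbol_poly_shift_zero_free) auto
  finally show ?case .
qed

lemma coeff_functional_nonzero_if_roots_outside_disk:
  fixes c :: "nat \<Rightarrow> complex" and G :: "complex poly"
  assumes "r > 0" and "G \<noteq> 0"
    and zero_free: "\<forall>t\<in>ball 0 r. poly (symbol_poly (degree G) c) t \<noteq> 0"
    and roots_outside: "\<And>x. poly G x = 0 \<Longrightarrow> 1 < r * cmod x"
  shows "coeff_functional c G \<noteq> 0"
proof -
  obtain root where G: "smult (lead_coeff G) (\<Prod>i<degree G. [:-root i, 1:]) = G"
    by (rule complex_poly_decompose')
  have "poly G (root i) = 0" if "i < degree G" for i
    using that by (subst G[symmetric]) (auto simp: poly_prod)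
  then have root_big: "1 < r * cmod (root i)" if "i < degree G" for i
    using that roots_outside by blast
  then have root_nz: "root i \<noteq> 0" if "i < degree G" for i
    using that \<open>r > 0\<close> by (metis mult_zero_right norm_zero not_one_less_zero)
  define y where "y i = - 1 / root i" for i
  have "(\<Prod>i<degree G. [:-root i, 1:]) = (\<Prod>i<degree G. smult (- root i) [:1, y i:])"
    by (rule prod.cong) (auto simp: y_def root_nz)
  also have "\<dots> = smult (\<Prod>i<degree G. - root i) (\<Prod>i<degree G. [:1, y i:])"
    by (rule prod_smult)
  finally have "coeff_functional c G =
      lead_coeff G * ((\<Prod>i<degree G. - root i) * coeff_functional c (\<Prod>i<degree G. [:1, y i:]))"
    using G by (metis coeff_functional_smult)
  moreover have "coeff_functional c (\<Prod>i<degree G. [:1, y i:]) \<noteq> 0"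
  proof (rule coeff_functional_prod_linear_nonzero[OF \<open>r > 0\<close> zero_free], intro allI impI)
    fix i assume "i < degree G"
    with root_big[of i] \<open>r > 0\<close> show "cmod (y i) < r"
      by (simp add: y_def norm_divide divide_less_eq mult.commute)
  qed
  ultimately show ?thesis
    using \<open>G \<noteq> 0\<close> root_nz by simp
qed

lemma enestrom_kakeya:
  fixes b :: "nat \<Rightarrow> real" and s :: complex
  assumes decreasing: "\<And>k. k < n \<Longrightarrow> b (Suc k) \<le> b k" and "b n > 0" and "cmod s < 1"
  shows "(\<Sum>k\<le>n. of_real (b k) * s ^ k) \<noteq> 0"
proof
  assume "(\<Sum>k\<le>n. of_real (b k) * s ^ k) = 0"
  define T where "T = (\<Sum>k<n. of_real (b k - b (Suc k)) * s ^ Suc k) + of_real (b n) * s ^ Suc n"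
  have "(1 - s) * (\<Sum>k\<le>m. of_real (b k) * s ^ k) =
      of_real (b 0) - ((\<Sum>k<m. of_real (b k - b (Suc k)) * s ^ Suc k) + of_real (b m) * s ^ Suc m)"
    for m
    by (induction m) (simp_all add: algebra_simps)
  from this[of n] have "T = of_real (b 0)"
    using \<open>(\<Sum>k\<le>n. of_real (b k) * s ^ k) = 0\<close> by (simp add: T_def)
  have "cmod T \<le> (\<Sum>k<n. cmod (of_real (b k - b (Suc k)) * s ^ Suc k)) + cmod (of_real (b n) * s ^ Suc n)"
    unfolding T_def by (rule order_trans[OF norm_triangle_ineq add_right_mono[OF norm_sum]])
  also have "\<dots> < (\<Sum>k<n. b k - b (Suc k)) + b n"
  proof (rule add_le_less_mono)
    have "cmod (of_real (b k - b (Suc k)) * s ^ Suc k) \<le> b k - b (Suc k)" if "k < n" for k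
    proof -
      have "cmod s ^ Suc k \<le> 1"
        using \<open>cmod s < 1\<close> by (intro power_le_one) auto
      then show ?thesis
        using decreasing[OF that] mult_left_le[of "cmod s ^ Suc k" "b k - b (Suc k)"]
        by (simp add: norm_mult norm_power del: power_Suc of_real_diff)
    qed
    then show "(\<Sum>k<n. cmod (of_real (b k - b (Suc k)) * s ^ Suc k)) \<le> (\<Sum>k<n. b k - b (Suc k))"
      by (intro sum_mono) simp
    have "cmod s ^ Suc n < 1"
      using \<open>cmod s < 1\<close> by (simp add: power_less_one_iff del: power_Suc)
    then show "cmod (of_real (b n) * s ^ Suc n) < b n"
      using \<open>b n > 0\<close> by (simp add: norm_mult norm_power del: power_Suc)
  qed
  also have "\<dots> = b 0"
    by (simp add: sum_lessThan_telescope')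
  finally show False
    using \<open>T = of_real (b 0)\<close> by simp
qed

lemma symbol_poly_fact_power_zero_free:
  fixes \<gamma> t :: complex
  assumes "d \<ge> 1" and "of_nat d * cmod (\<gamma> * t) < 1"
  shows "poly (symbol_poly d (\<lambda>k. fact k * \<gamma> ^ k)) t \<noteq> 0"
proof -
  define b :: "nat \<Rightarrow> real" where "b k = fact k * real (d choose k) / real d ^ k" for k
  have "real d > 0"
    using \<open>d \<ge> 1\<close> by simp
  have "poly (symbol_poly d (\<lambda>k. fact k * \<gamma> ^ k)) t =
      (\<Sum>k\<le>d. of_real (b k) * (of_nat d * (\<gamma> * t)) ^ k)"
    using \<open>real d > 0\<close> by (simp add: poly_symbol_poly b_def power_mult_distrib field_simps)
  moreover have "b (Suc k) \<le> b k" if "k < d" for k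
  proof -
    have "Suc k * (d choose Suc k) = (d - k) * (d choose k)"
      using binomial_absorption[of k d] binomial_absorb_comp[of d k] by simp
    then have "real (Suc k) * real (d choose Suc k) = real (d - k) * real (d choose k)"
      by (metis of_nat_mult)
    moreover have "b (Suc k) = fact k * (real (Suc k) * real (d choose Suc k)) / real d ^ Suc k"
      by (simp add: b_def algebra_simps)
    ultimately have "b (Suc k) = fact k * (real (d - k) * real (d choose k)) / real d ^ Suc k"
      by simp
    also have "\<dots> \<le> fact k * (real d * real (d choose k)) / real d ^ Suc k"
      by (intro divide_right_mono mult_left_mono mult_right_mono) auto
    also have "\<dots> = b k"
      using \<open>real d > 0\<close> by (simp add: b_def)
    finally show ?thesis .
  qed
  moreover have "b d > 0"
    using \<open>real d > 0\<close> by (simp add: b_def)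
  ultimately show ?thesis
    using assms(2) enestrom_kakeya[of d b "of_nat d * (\<gamma> * t)"] by (simp add: norm_mult)
qed

section \<open>The operator \<open>I - \<gamma> D\<close>\<close>

lemma degree_H1 [simp]: "degree (H1 \<gamma> f) = degree f"
proof (cases "degree f = 0")
  case True
  then have "pderiv f = 0"
    by (simp add: pderiv_eq_0_iff)
  then show ?thesis
    by (simp add: H1_def)
next
  case False
  then have "degree (- smult \<gamma> (pderiv f)) < degree f"
    by (simp add: degree_pderiv)
  then show ?thesis
    unfolding H1_def by (metis degree_add_eq_left diff_conv_add_uminus)
qed

lemma H1_eq_0_iff [simp]: "H1 \<gamma> f = 0 \<longleftrightarrow> f = 0"
proof
  assume "H1 \<gamma> f = 0"
  then have "pderiv f = 0"
    using degree_H1[of \<gamma> f] by (simp add: pderiv_eq_0_iff)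
  with \<open>H1 \<gamma> f = 0\<close> show "f = 0"
    by (simp add: H1_def)
qed (simp add: H1_def)

lemma H1_add: "H1 \<gamma> (f + g) = H1 \<gamma> f + H1 \<gamma> g"
  by (simp add: H1_def pderiv_add smult_add_right)

lemma H1_diff: "H1 \<gamma> (f - g) = H1 \<gamma> f - H1 \<gamma> g"
  by (simp add: H1_def pderiv_diff smult_diff_right)

lemma inj_H1: "inj (H1 \<gamma>)"
  by (rule injI) (metis H1_diff H1_eq_0_iff right_minus_eq)

lemma H1_pcompose_shift: "H1 \<gamma> (pcompose f [:z, 1:]) = pcompose (H1 \<gamma> f) [:z, 1:]"
  by (simp add: H1_def pcompose_diff pcompose_smult pderiv_pcompose pderiv_pCons)

text \<open>The functional below is \<open>P \<mapsto> \<Sum>\<^sub>k \<gamma>\<^sup>k (D\<^sup>k P)(0)\<close>, evaluation at \<open>0\<close> after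
  the inverse \<open>\<Sum>\<^sub>k \<gamma>\<^sup>k D\<^sup>k\<close> of \<open>I - \<gamma> D\<close>.\<close>

lemma coeff_functional_H1: "coeff_functional (\<lambda>k. fact k * \<gamma> ^ k) (H1 \<gamma> F) = coeff F 0"
proof -
  define h where "h k = fact k * \<gamma> ^ k * coeff F k" for k
  have "coeff_functional (\<lambda>k. fact k * \<gamma> ^ k) (H1 \<gamma> F) =
      (\<Sum>k\<le>degree F. fact k * \<gamma> ^ k * coeff (H1 \<gamma> F) k)"
    by (simp add: coeff_functional_def)
  also have "\<dots> = (\<Sum>k\<le>degree F. h k - h (Suc k))"
    by (simp add: h_def H1_def coeff_pderiv algebra_simps)
  also have "\<dots> = h 0 - h (Suc (degree F))"
    by (rule sum_telescope)
  finally show ?thesis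
    by (simp add: h_def coeff_eq_0)
qed

lemma H1_root_near_root:
  assumes "f \<noteq> 0" and "poly (H1 \<gamma> f) w = 0"
  obtains a where "poly f a = 0" and "cmod (w - a) \<le> real (degree f) * cmod \<gamma>"
proof (cases "poly f w = 0")
  case True
  then show ?thesis
    using that[of w] by simp
next
  case False
  obtain root where roots: "\<And>i. i < degree f \<Longrightarrow> poly f (root i) = 0"
    and logderiv: "\<And>x. poly f x \<noteq> 0 \<Longrightarrow>
      poly (pderiv f) x = poly f x * (\<Sum>i<degree f. 1 / (x - root i))"
    using complex_poly_roots_logderiv[of f] by blast
  define S where "S = (\<Sum>i<degree f. 1 / (w - root i))"
  have "poly f w * (1 - \<gamma> * S) = 0"
    using assms(2) False by (simp add: H1_def logderiv S_def algebra_simps)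
  then have "\<gamma> * S = 1"
    using False by simp
  then have "degree f \<noteq> 0" and "\<gamma> \<noteq> 0"
    by (intro notI, simp add: S_def)+
  have "\<exists>i<degree f. cmod (w - root i) \<le> real (degree f) * cmod \<gamma>"
  proof (rule ccontr)
    assume "\<not> ?thesis"
    then have far: "real (degree f) * cmod \<gamma> < cmod (w - root i)" if "i < degree f" for i
      using that by (meson not_le)
    have "cmod S \<le> (\<Sum>i<degree f. 1 / cmod (w - root i))"
      unfolding S_def by (rule order_trans[OF norm_sum]) (simp add: norm_divide)
    also have "\<dots> < (\<Sum>i<degree f. 1 / (real (degree f) * cmod \<gamma>))"
      using far \<open>degree f \<noteq> 0\<close> \<open>\<gamma> \<noteq> 0\<close> by (intro sum_strict_mono frac_less2) auto
    also have "\<dots> = 1 / cmod \<gamma>"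
      using \<open>degree f \<noteq> 0\<close> by simp
    finally have "cmod (\<gamma> * S) < 1"
      using \<open>\<gamma> \<noteq> 0\<close> by (simp add: norm_mult field_simps)
    with \<open>\<gamma> * S = 1\<close> show False
      by simp
  qed
  then show ?thesis
    using that roots by blast
qed

lemma root_near_H1_root:
  assumes "f \<noteq> 0" and "poly f z = 0"
  obtains w where "poly (H1 \<gamma> f) w = 0" and "cmod (z - w) \<le> real (degree f) * cmod \<gamma>"
proof -
  define d where "d = degree f"
  have "\<exists>w. poly (H1 \<gamma> f) w = 0 \<and> cmod (z - w) \<le> real d * cmod \<gamma>"
  proof (rule ccontr)
    assume no_near: "\<not> ?thesis"
    have far: "real d * cmod \<gamma> < cmod x" if "poly (H1 \<gamma> f) (z + x) = 0" for x
      using no_near that by force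
    have "\<gamma> \<noteq> 0"
      using far[of 0] assms(2) by (auto simp: H1_def)
    have "d \<noteq> 0"
    proof
      assume "d = 0"
      then obtain a where "f = [:a:]"
        unfolding d_def by (rule degree_eq_zeroE)
      with assms show False
        by simp
    qed
    then have "d \<ge> 1"
      by simp
    define G where "G = H1 \<gamma> (pcompose f [:z, 1:])"
    define r where "r = 1 / (real d * cmod \<gamma>)"
    have "r > 0"
      using \<open>d \<ge> 1\<close> \<open>\<gamma> \<noteq> 0\<close> by (simp add: r_def)
    have "coeff_functional (\<lambda>k. fact k * \<gamma> ^ k) G = poly f z"
      by (simp add: G_def coeff_functional_H1 poly_pcompose flip: poly_0_coeff_0)
    moreover have "coeff_functional (\<lambda>k. fact k * \<gamma> ^ k) G \<noteq> 0"
    proof (rule coeff_functional_nonzero_if_roots_outside_disk[OF \<open>r > 0\<close>])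
      show "G \<noteq> 0"
        using assms(1) pcompose_eq_0[of f "[:z, 1:]"] unfolding G_def H1_eq_0_iff by auto
      show "\<forall>t\<in>ball 0 r. poly (symbol_poly (degree G) (\<lambda>k. fact k * \<gamma> ^ k)) t \<noteq> 0"
      proof
        fix t :: complex assume "t \<in> ball 0 r"
        then have "real d * cmod (\<gamma> * t) < 1"
          using \<open>d \<ge> 1\<close> \<open>\<gamma> \<noteq> 0\<close> by (simp add: r_def norm_mult field_simps)
        then show "poly (symbol_poly (degree G) (\<lambda>k. fact k * \<gamma> ^ k)) t \<noteq> 0"
          using symbol_poly_fact_power_zero_free[OF \<open>d \<ge> 1\<close>]
          by (simp add: G_def d_def degree_pcompose)
      qed
      show "1 < r * cmod x" if "poly G x = 0" for x
        using far[of x] that \<open>d \<ge> 1\<close> \<open>\<gamma> \<noteq> 0\<close>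
        by (simp add: G_def H1_pcompose_shift poly_pcompose r_def field_simps)
    qed
    ultimately show False
      using assms(2) by simp
  qed
  then show ?thesis
    using that by (auto simp: d_def)
qed

section \<open>Hausdorff distance between zero sets\<close>

lemma Zset_nonconstant:
  assumes "degree f \<ge> 1"
  shows "Zset f = {z. poly f z = 0}" and "finite (Zset f)" and "Zset f \<noteq> {}" and "Zset f \<noteq> UNIV"
proof -
  have "f \<noteq> 0"
    using assms by auto
  then show Z: "Zset f = {z. poly f z = 0}"
    by (simp add: Zset_def)
  then show "finite (Zset f)"
    using \<open>f \<noteq> 0\<close> by (simp add: poly_roots_finite)
  then show "Zset f \<noteq> UNIV"
    using infinite_UNIV_char_0 by auto
  have "\<not> constant (poly f)"
    using assms by (simp add: constant_degree)
  then show "Zset f \<noteq> {}"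
    using fundamental_theorem_of_algebra Z by auto
qed

lemma dH_sym: "dH A B = dH B A"
  unfolding dH_def by (auto simp: max.commute)

lemma dh_le:
  assumes "finite A" and "A \<noteq> {}" and "finite B" and "B \<noteq> {}"
    and "\<And>y. y \<in> B \<Longrightarrow> \<exists>x\<in>A. cmod (x - y) \<le> \<delta>"
  shows "dh A B \<le> \<delta>"
  using assms unfolding dh_def by (auto simp: Max_le_iff Min_le_iff)

lemma dH_Zset_le:
  assumes "degree f \<ge> 1" and "degree g \<ge> 1"
    and "\<And>y. poly g y = 0 \<Longrightarrow> \<exists>x. poly f x = 0 \<and> cmod (x - y) \<le> \<delta>"
    and "\<And>x. poly f x = 0 \<Longrightarrow> \<exists>y. poly g y = 0 \<and> cmod (y - x) \<le> \<delta>"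
  shows "dH (Zset f) (Zset g) \<le> ereal \<delta>"
proof -
  note f = Zset_nonconstant[OF assms(1)] and g = Zset_nonconstant[OF assms(2)]
  have "dh (Zset f) (Zset g) \<le> \<delta>"
  proof (rule dh_le[OF f(2,3) g(2,3)])
    fix y assume "y \<in> Zset g"
    then show "\<exists>x\<in>Zset f. cmod (x - y) \<le> \<delta>"
      using assms(3) unfolding f(1) g(1) by blast
  qed
  moreover have "dh (Zset g) (Zset f) \<le> \<delta>"
  proof (rule dh_le[OF g(2,3) f(2,3)])
    fix x assume "x \<in> Zset f"
    then show "\<exists>y\<in>Zset g. cmod (y - x) \<le> \<delta>"
      using assms(4) unfolding f(1) g(1) by blast
  qed
  ultimately show ?thesis
    using f(3,4) g(3,4) by (simp add: dH_def)
qed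

lemma dH_Zset_H1_le: "dH (Zset f) (Zset (H1 \<gamma> f)) \<le> ereal (real (degree f) * cmod \<gamma>)"
proof (cases "degree f = 0")
  case True
  then obtain a where "f = [:a:]"
    by (rule degree_eq_zeroE)
  then show ?thesis
    by (simp add: H1_def Zset_def dH_def)
next
  case False
  show ?thesis
  proof (rule dH_Zset_le)
    show "degree f \<ge> 1" and "degree (H1 \<gamma> f) \<ge> 1"
      using False by simp_all
    then have "f \<noteq> 0"
      by auto
    show "\<exists>x. poly f x = 0 \<and> cmod (x - y) \<le> real (degree f) * cmod \<gamma>"
      if "poly (H1 \<gamma> f) y = 0" for y
      by (rule H1_root_near_root[OF \<open>f \<noteq> 0\<close> that]) (metis norm_minus_commute)
    show "\<exists>y. poly (H1 \<gamma> f) y = 0 \<and> cmod (y - x) \<le> real (degree f) * cmod \<gamma>"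
      if "poly f x = 0" for x
      by (rule root_near_H1_root[of f x \<gamma>, OF \<open>f \<noteq> 0\<close> that]) (metis norm_minus_commute)
  qed
qed

text \<open>For \<open>f = x\<^sup>n\<close> the root \<open>0\<close> of \<open>f\<close> is at distance \<open>n |\<gamma>|\<close> from the root \<open>n \<gamma>\<close> of
  \<open>H1 \<gamma> f = x\<^sup>n\<^sup>-\<^sup>1 (x - n \<gamma>)\<close>.\<close>

lemma dH_Zset_H1_monom: "dH (Zset (monom 1 n)) (Zset (H1 \<gamma> (monom 1 n))) = ereal (real n * cmod \<gamma>)"
proof (cases "n = 0")
  case True
  then show ?thesis
    by (simp add: H1_def Zset_def dH_def)
next
  case False
  define f :: "complex poly" where "f = monom 1 n"
  have "degree f = n"
    by (simp add: f_def degree_monom_eq)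
  then have "degree f \<ge> 1" and "degree (H1 \<gamma> f) \<ge> 1"
    using False by simp_all
  note Zf = Zset_nonconstant[OF \<open>degree f \<ge> 1\<close>]
    and Zg = Zset_nonconstant[OF \<open>degree (H1 \<gamma> f) \<ge> 1\<close>]
  have "Zset f = {0}"
    using False unfolding Zf(1) by (auto simp: f_def poly_monom)
  have "poly (H1 \<gamma> f) (of_nat n * \<gamma>) = 0"
    using False by (simp add: f_def H1_def pderiv_monom poly_monom power_eq_if)
  then have "cmod (of_nat n * \<gamma>) \<le> dh (Zset f) (Zset (H1 \<gamma> f))"
    unfolding dh_def \<open>Zset f = {0}\<close> using Zg by (intro Max_ge) auto
  then have "ereal (real n * cmod \<gamma>) \<le> dH (Zset f) (Zset (H1 \<gamma> f))"
    using Zf(3,4) Zg(3,4) by (simp add: dH_def norm_mult le_max_iff_disj)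
  then show ?thesis
    using dH_Zset_H1_le[of f \<gamma>] \<open>degree f = n\<close> by (simp add: f_def)
qed

lemma KH_H1: "KH n (H1 \<gamma>) = ereal (real n * cmod \<gamma>)"
proof (rule antisym)
  have "dH (Zset f) (Zset (H1 \<gamma> f)) \<le> ereal (real n * cmod \<gamma>)" if "f \<in> Pn n" for f
  proof (rule order_trans[OF dH_Zset_H1_le])
    show "ereal (real (degree f) * cmod \<gamma>) \<le> ereal (real n * cmod \<gamma>)"
      using that by (simp add: Pn_def mult_right_mono)
  qed
  then show "KH n (H1 \<gamma>) \<le> ereal (real n * cmod \<gamma>)"
    unfolding KH_def by (rule SUP_least)
  have "dH (Zset (monom 1 n)) (Zset (H1 \<gamma> (monom 1 n))) \<le> KH n (H1 \<gamma>)"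
    unfolding KH_def by (rule SUP_upper) (simp add: Pn_def degree_monom_le)
  then show "ereal (real n * cmod \<gamma>) \<le> KH n (H1 \<gamma>)"
    by (simp only: dH_Zset_H1_monom)
qed

lemma H1_neumann_partial_sum:
  "H1 \<gamma> (\<Sum>k\<le>N. smult (\<gamma> ^ k) ((pderiv ^^ k) f)) = f - smult (\<gamma> ^ Suc N) ((pderiv ^^ Suc N) f)"
  by (induction N) (simp_all add: H1_add, simp_all add: H1_def pderiv_smult algebra_simps)

lemma H1_image_Pn: "H1 \<gamma> ` Pn n = Pn n"
proof
  show "H1 \<gamma> ` Pn n \<subseteq> Pn n"
    by (auto simp: Pn_def)
  show "Pn n \<subseteq> H1 \<gamma> ` Pn n"
  proof
    fix f assume "f \<in> Pn n"
    define g where "g = (\<Sum>k\<le>n. smult (\<gamma> ^ k) ((pderiv ^^ k) f))"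
    have "coeff ((pderiv ^^ Suc n) f) k = 0" for k
      using \<open>f \<in> Pn n\<close> by (simp only: coeff_higher_pderiv) (simp add: Pn_def coeff_eq_0)
    then have "(pderiv ^^ Suc n) f = 0"
      by (intro poly_eqI) (simp only: coeff_0)
    then have "H1 \<gamma> g = f"
      by (simp add: g_def H1_neumann_partial_sum)
    moreover from this have "g \<in> Pn n"
      using \<open>f \<in> Pn n\<close> degree_H1[of \<gamma> g] by (simp add: Pn_def)
    ultimately show "f \<in> H1 \<gamma> ` Pn n"
      by blast
  qed
qed

lemma H1inv_H1: "g \<in> Pn n \<Longrightarrow> H1inv n \<gamma> (H1 \<gamma> g) = g"
  unfolding H1inv_def by (rule the_equality) (auto dest: injD[OF inj_H1])

lemma KH_H1inv: "KH n (H1inv n \<gamma>) = KH n (H1 \<gamma>)"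
proof -
  have "KH n (H1inv n \<gamma>) = (SUP f\<in>H1 \<gamma> ` Pn n. dH (Zset f) (Zset (H1inv n \<gamma> f)))"
    by (simp add: KH_def H1_image_Pn)
  also have "\<dots> = (SUP g\<in>Pn n. dH (Zset (H1 \<gamma> g)) (Zset (H1inv n \<gamma> (H1 \<gamma> g))))"
    by (simp only: image_image)
  also have "\<dots> = (SUP g\<in>Pn n. dH (Zset (H1 \<gamma> g)) (Zset g))"
    by (rule SUP_cong) (simp_all add: H1inv_H1)
  also have "\<dots> = KH n (H1 \<gamma>)"
    by (simp add: KH_def dH_sym)
  finally show ?thesis .
qed

theorem mainTheorem18:
  fixes n :: nat and \<gamma> :: complex
  assumes "n \<ge> 1"
  shows "KH n (H1 \<gamma>) = ereal (real n * cmod \<gamma>) \<and>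
         KH n (H1inv n \<gamma>) = ereal (real n * cmod \<gamma>)"
  by (simp add: KH_H1inv KH_H1)

end
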